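(* Let $Q$ be a uniquely $2$-divisible commutative A-loop, and define $x\circ y = \big(x^{-1}\backslash (xy^2)\big)^{1/2}$, where $z^{1/2}$ denotes the unique $w\in Q$ with $w^2=z$. Then $(Q,\circ)$ is a (left) Bruck loop, and powers in $Q$ coincide with powers in $(Q,\circ)$.
   Context: A loop is a set with a binary operation and neutral element $1$ in which all left and right translations are bijections; $\mathrm{Inn}(Q)$ is the stabilizer of $1$ in the group generated by all translations. A commutative A-loop is a commutative loop all of whose inner mappings are automorphisms. $x\backslash y$ is the unique $z$ with $xz=y$, $x^{-1}=x\backslash 1$. A loop is uniquely $2$-divisible if $x\mapsto x^2$ is a bijection. A left Bruck loop is a loop satisfying the left Bol identity $x\circ(y\circ(x\circ z)) = (x\circ(y\circ x))\circ z$ and the automorphic inverse property $(x\circ y)^{-1}=x^{-1}\circ y^{-1}$. Powers are $x^n=1L_x^n$ with $L_x$ the left translation of the respective operation. *)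

theory Defs
  imports Main
begin

definition loop :: "('a \<Rightarrow> 'a \<Rightarrow> 'a) \<Rightarrow> 'a \<Rightarrow> bool" where
  "loop m e \<longleftrightarrow> (\<forall>x. m e x = x \<and> m x e = x)
     \<and> (\<forall>x. bij (\<lambda>y. m x y)) \<and> (\<forall>x. bij (\<lambda>y. m y x))"

definition ltrans :: "('a \<Rightarrow> 'a \<Rightarrow> 'a) \<Rightarrow> 'a \<Rightarrow> 'a \<Rightarrow> 'a" where
  "ltrans m x = (\<lambda>y. m x y)"

definition rtrans :: "('a \<Rightarrow> 'a \<Rightarrow> 'a) \<Rightarrow> 'a \<Rightarrow> 'a \<Rightarrow> 'a" where
  "rtrans m x = (\<lambda>y. m y x)"

inductive_set mlt :: "('a \<Rightarrow> 'a \<Rightarrow> 'a) \<Rightarrow> ('a \<Rightarrow> 'a) set" for m where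
  mlt_id: "id \<in> mlt m"
| mlt_L: "ltrans m x \<in> mlt m"
| mlt_R: "rtrans m x \<in> mlt m"
| mlt_inv: "f \<in> mlt m \<Longrightarrow> inv f \<in> mlt m"
| mlt_comp: "f \<in> mlt m \<Longrightarrow> g \<in> mlt m \<Longrightarrow> f \<circ> g \<in> mlt m"

definition inn :: "('a \<Rightarrow> 'a \<Rightarrow> 'a) \<Rightarrow> 'a \<Rightarrow> ('a \<Rightarrow> 'a) set" where
  "inn m e = {f \<in> mlt m. f e = e}"

definition automorphism :: "('a \<Rightarrow> 'a \<Rightarrow> 'a) \<Rightarrow> ('a \<Rightarrow> 'a) \<Rightarrow> bool" where
  "automorphism m f \<longleftrightarrow> bij f \<and> (\<forall>x y. f (m x y) = m (f x) (f y))"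

definition commutative_A_loop :: "('a \<Rightarrow> 'a \<Rightarrow> 'a) \<Rightarrow> 'a \<Rightarrow> bool" where
  "commutative_A_loop m e \<longleftrightarrow> loop m e \<and> (\<forall>x y. m x y = m y x)
     \<and> (\<forall>f \<in> inn m e. automorphism m f)"

definition uniquely_2_divisible :: "('a \<Rightarrow> 'a \<Rightarrow> 'a) \<Rightarrow> bool" where
  "uniquely_2_divisible m \<longleftrightarrow> bij (\<lambda>x. m x x)"

definition ldiv :: "('a \<Rightarrow> 'a \<Rightarrow> 'a) \<Rightarrow> 'a \<Rightarrow> 'a \<Rightarrow> 'a" where
  "ldiv m x y = (THE z. m x z = y)"

definition linv :: "('a \<Rightarrow> 'a \<Rightarrow> 'a) \<Rightarrow> 'a \<Rightarrow> 'a \<Rightarrow> 'a" where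
  "linv m e x = ldiv m x e"

definition sqrt_l :: "('a \<Rightarrow> 'a \<Rightarrow> 'a) \<Rightarrow> 'a \<Rightarrow> 'a" where
  "sqrt_l m z = (THE w. m w w = z)"

definition circ_op :: "('a \<Rightarrow> 'a \<Rightarrow> 'a) \<Rightarrow> 'a \<Rightarrow> 'a \<Rightarrow> 'a \<Rightarrow> 'a" where
  "circ_op m e x y = sqrt_l m (ldiv m (linv m e x) (m x (m y y)))"

definition left_bruck_loop :: "('a \<Rightarrow> 'a \<Rightarrow> 'a) \<Rightarrow> 'a \<Rightarrow> bool" where
  "left_bruck_loop m e \<longleftrightarrow> loop m e
     \<and> (\<forall>x y z. m x (m y (m x z)) = m (m x (m y x)) z)
     \<and> (\<forall>x y. linv m e (m x y) = m (linv m e x) (linv m e y))"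

definition lpow :: "('a \<Rightarrow> 'a \<Rightarrow> 'a) \<Rightarrow> 'a \<Rightarrow> 'a \<Rightarrow> int \<Rightarrow> 'a" where
  "lpow m e x n = (if 0 \<le> n then (ltrans m x ^^ nat n) e
                   else (inv (ltrans m x) ^^ nat (- n)) e)"

end

theory Submission
  imports Defs
begin

text \<open>Write \<open>P x = L_x L_{x^-1}^-1 = L_{x^-1}^-1 L_x\<close>, so that \<open>(x \<circ> y)^2 = P x (y^2)\<close>.
  Because the inner mappings of a commutative A-loop are automorphisms, suitable inner mappings
  yield the automorphic inverse property and the identity \<open>P x (P y (P x v)) = P (P x y) v\<close>.
  As squaring is bijective, \<open>\<circ>\<close> is a loop whose left Bol identity is the square root of this
  identity, with \<open>x \<circ> (y \<circ> x) = P x y\<close>. For powers: an inner mapping fixing \<open>x\<close> fixes every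
  power of \<open>x\<close>, which makes \<open>x\<close> power-associative, and then \<open>x \<circ> x^k = x^(k+1)\<close>.\<close>

lemma funpow_shift:
  fixes g :: "int \<Rightarrow> 'a"
  assumes "\<And>k. f (g k) = g (k + d)"
  shows "(f ^^ j) (g k) = g (k + int j * d)"
  by (induction j) (simp_all add: assms algebra_simps)

lemma inv_shift:
  fixes g :: "int \<Rightarrow> 'a"
  assumes "bij f" and "\<And>k. f (g k) = g (k + 1)"
  shows "inv f (g k) = g (k - 1)"
  using assms(2)[of "k - 1"] bij_is_inj[OF assms(1)] by (simp add: inv_f_eq)

lemma lpow_succ:
  assumes "bij (ltrans m x)"
  shows "m x (lpow m e x k) = lpow m e x (k + 1)"
proof (cases "0 \<le> k")
  case True
  then have "nat (k + 1) = Suc (nat k)" by simp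
  with True show ?thesis by (simp add: lpow_def ltrans_def)
next
  case False
  define j where "j = nat (- k - 1)"
  with False have k: "k = - int (Suc j)" by simp
  let ?L = "ltrans m x"
  have "lpow m e x (- int j) = (inv ?L ^^ j) e"
    by (cases j) (simp_all add: lpow_def nat_add_distrib)
  then have "lpow m e x (k + 1) = (inv ?L ^^ j) e"
    using k by simp
  moreover have "lpow m e x k = inv ?L ((inv ?L ^^ j) e)"
    using k by (simp add: lpow_def nat_add_distrib)
  moreover have "m x (inv ?L y) = y" for y
    using surj_f_inv_f[OF bij_is_surj[OF assms]] by (simp add: ltrans_def)
  ultimately show ?thesis by simp
qed

lemma lpow_eqI:
  fixes g :: "int \<Rightarrow> 'a"
  assumes bij_L: "bij (ltrans m x)" and succ: "\<And>k. m x (g k) = g (k + 1)" and "g 0 = e"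
  shows "lpow m e x n = g n"
proof -
  have "ltrans m x (g k) = g (k + 1)" for k by (simp add: ltrans_def succ)
  then have "(ltrans m x ^^ j) e = g (int j)" and "(inv (ltrans m x) ^^ j) e = g (- int j)" for j
    using funpow_shift[of "ltrans m x" g 1 j 0] funpow_shift[of "inv (ltrans m x)" g "-1" j 0]
      inv_shift[OF bij_L] \<open>g 0 = e\<close> by simp_all
  then show ?thesis by (simp add: lpow_def)
qed

locale comm_loop =
  fixes m :: "'a \<Rightarrow> 'a \<Rightarrow> 'a" (infixl "\<otimes>" 70) and e :: 'a
  assumes loop: "loop m e" and commute: "x \<otimes> y = y \<otimes> x"
begin

abbreviation ld (infixl "\<setminus>" 70) where "a \<setminus> b \<equiv> ldiv m a b"
abbreviation iv where "iv a \<equiv> linv m e a"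

lemma left_unit [simp]: "e \<otimes> a = a" and right_unit [simp]: "a \<otimes> e = a"
  using loop by (simp_all add: loop_def)

lemma bij_ltrans: "bij (ltrans m a)"
  using loop by (simp add: loop_def ltrans_def)

lemma mult_ldiv [simp]: "a \<otimes> (a \<setminus> b) = b"
proof -
  have "\<exists>!z. a \<otimes> z = b"
    using bij_ltrans[of a] by (auto simp: ltrans_def bij_iff)
  then show ?thesis unfolding ldiv_def by (rule theI')
qed

lemma mult_left_cancel [simp]: "a \<otimes> x = a \<otimes> y \<longleftrightarrow> x = y"
  using bij_is_inj[OF bij_ltrans[of a]] by (auto simp: ltrans_def dest: injD)

lemma mult_right_cancel [simp]: "x \<otimes> a = y \<otimes> a \<longleftrightarrow> x = y"
  by (simp add: commute[of _ a])

lemma ldiv_mult [simp]: "a \<setminus> (a \<otimes> b) = b"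
  using mult_ldiv mult_left_cancel by metis

lemma ldiv_eqI: "a \<otimes> x = b \<Longrightarrow> a \<setminus> b = x"
  by auto

lemma ldiv_self [simp]: "a \<setminus> a = e" and ldiv_unit [simp]: "e \<setminus> a = a"
  by (simp_all add: ldiv_eqI)

lemma iv_conv_ldiv: "iv a = a \<setminus> e"
  by (simp add: linv_def)

lemma mult_iv [simp]: "a \<otimes> iv a = e" and iv_mult [simp]: "iv a \<otimes> a = e"
  by (simp_all add: iv_conv_ldiv commute[of _ a])

lemma iv_iv [simp]: "iv (iv a) = a"
  by (simp add: iv_conv_ldiv[of "iv a"] ldiv_eqI)

lemma iv_unit [simp]: "iv e = e"
  by (simp add: iv_conv_ldiv)

lemma inv_ltrans: "inv (ltrans m a) = (\<lambda>z. a \<setminus> z)"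
  by (rule ext, rule inv_f_eq[OF bij_is_inj[OF bij_ltrans]]) (simp add: ltrans_def)

lemma lmult_in_mlt: "(\<lambda>z. a \<otimes> z) \<in> mlt m"
  using mlt_L[of m a] by (simp add: ltrans_def)

lemma ldiv_in_mlt: "(\<lambda>z. a \<setminus> z) \<in> mlt m"
  using mlt_inv[OF mlt_L[of m a]] by (simp add: inv_ltrans)

lemma mlt_compose: "f \<in> mlt m \<Longrightarrow> g \<in> mlt m \<Longrightarrow> (\<lambda>z. f (g z)) \<in> mlt m"
  using mlt_comp[of f m g] by (simp add: comp_def)

lemma mlt_funpow: "f \<in> mlt m \<Longrightarrow> f ^^ j \<in> mlt m"
  by (induction j) (auto intro: mlt.intros)

lemma innI: "f \<in> mlt m \<Longrightarrow> f e = e \<Longrightarrow> f \<in> inn m e"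
  by (simp add: inn_def)

end

locale comm_A_loop = comm_loop +
  assumes inner_automorphism: "f \<in> inn m e \<Longrightarrow> automorphism m f"
begin

lemma inner_mult: "f \<in> inn m e \<Longrightarrow> f (a \<otimes> b) = f a \<otimes> f b"
  using inner_automorphism by (simp add: automorphism_def)

lemma inner_ldiv: "f \<in> inn m e \<Longrightarrow> f (a \<setminus> b) = f a \<setminus> f b"
  using inner_mult[of f a "a \<setminus> b"] by (simp add: ldiv_eqI)

lemma inner_iv: "f \<in> inn m e \<Longrightarrow> f (iv a) = iv (f a)"
  using inner_ldiv[of f a e] by (simp add: iv_conv_ldiv inn_def)

lemma inner_ldiv_mult_mult: "(\<lambda>z. (x \<otimes> y) \<setminus> (x \<otimes> (y \<otimes> z))) \<in> inn m e"
  by (rule innI, rule mlt_compose[OF ldiv_in_mlt], rule mlt_compose[OF lmult_in_mlt lmult_in_mlt])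
    simp

lemma iv_split: "iv a = iv (a \<otimes> b) \<otimes> iv ((a \<otimes> b) \<setminus> a)"
proof -
  define T where "T = (\<lambda>z. (a \<otimes> b) \<setminus> (a \<otimes> (b \<otimes> z)))"
  have T: "T \<in> inn m e" unfolding T_def by (rule inner_ldiv_mult_mult)
  have "T a = a" by (simp add: T_def commute[of b a] commute[of a "a \<otimes> b"])
  then have "iv a = T (iv a)" by (simp add: inner_iv[OF T])
  also have "\<dots> = T ((b \<setminus> iv a) \<otimes> b)" by (simp add: commute[of _ b])
  also have "\<dots> = T (b \<setminus> iv a) \<otimes> T b" by (rule inner_mult[OF T])
  also have "T (b \<setminus> iv a) = iv (a \<otimes> b)" by (simp add: T_def iv_conv_ldiv)
  also have "T b = iv ((a \<otimes> b) \<setminus> a)" using inner_iv[OF T, of "iv b"] by (simp add: T_def)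
  finally show ?thesis .
qed

lemma iv_mult_distrib: "iv (a \<otimes> b) = iv a \<otimes> iv b"
  using iv_split[of "a \<otimes> b" "(a \<otimes> b) \<setminus> a"] by simp

lemma iv_ldiv: "iv (a \<setminus> b) = iv a \<setminus> iv b"
  by (rule sym, rule ldiv_eqI) (simp flip: iv_mult_distrib)

lemma inner_iv_mult_mult: "(\<lambda>z. iv x \<otimes> (x \<otimes> z)) \<in> inn m e"
  by (rule innI, rule mlt_compose[OF lmult_in_mlt lmult_in_mlt]) simp

lemma iv_mult_mult_self: "iv x \<otimes> (x \<otimes> x) = x"
  using inner_iv[OF inner_iv_mult_mult, of x x] by (metis iv_iv mult_iv right_unit)

lemma mult_iv_mult_commute: "x \<otimes> (iv x \<otimes> w) = iv x \<otimes> (x \<otimes> w)"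
  using inner_mult[OF inner_iv_mult_mult, of x "iv x" w] by simp

definition P :: "'a \<Rightarrow> 'a \<Rightarrow> 'a" where
  "P a v = a \<otimes> (iv a \<setminus> v)"

lemma P_conv_ldiv: "iv a \<setminus> (a \<otimes> v) = P a v"
  by (rule ldiv_eqI) (simp add: P_def flip: mult_iv_mult_commute)

lemma P_P_iv [simp]: "P a (P (iv a) v) = v" and P_iv_P [simp]: "P (iv a) (P a v) = v"
  by (simp_all add: P_def)

lemma P_unit [simp]: "P a e = a \<otimes> a"
  by (simp add: P_def flip: iv_conv_ldiv)

lemma P_at_unit [simp]: "P e v = v"
  by (simp add: P_def)

lemma P_cancel [simp]: "P a v = P a w \<longleftrightarrow> v = w"
  by (metis P_iv_P)

lemma iv_P: "iv (P a v) = P (iv a) (iv v)"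
  by (simp add: P_def iv_mult_distrib iv_ldiv)

lemma P_sandwich: "P x (P y (P x v)) = P (P x y) v"
proof -
  \<comment> \<open>\<open>h = L_c^-1 P_x L_y\<close> is inner; conjugating \<open>P_x L_y = L_c h\<close> by inversion (which
    commutes with \<open>h\<close>) gives \<open>P_{x^-1} L_{y^-1} = L_{c^-1} h\<close>, and evaluating both at a suitable
    point gives the identity.\<close>
  define c where "c = P x y"
  define g where "g = (\<lambda>z. P x (y \<otimes> z))"
  define h where "h = (\<lambda>z. c \<setminus> g z)"
  have "(\<lambda>z. c \<setminus> (x \<otimes> (iv x \<setminus> (y \<otimes> z)))) \<in> inn m e"
    by (rule innI, rule mlt_compose[OF ldiv_in_mlt], rule mlt_compose[OF lmult_in_mlt],
        rule mlt_compose[OF ldiv_in_mlt lmult_in_mlt]) (simp add: c_def P_def)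
  then have h: "h \<in> inn m e" by (simp add: h_def g_def P_def)
  have "P (iv x) (iv y \<otimes> z) = iv c \<otimes> h z" for z
  proof -
    have "P (iv x) (iv y \<otimes> z) = iv (g (iv z))"
      by (simp add: g_def iv_P iv_mult_distrib)
    also have "g (iv z) = c \<otimes> h (iv z)"
      by (simp add: h_def)
    also have "h (iv z) = iv (h z)"
      by (rule inner_iv[OF h])
    finally show ?thesis by (simp add: iv_mult_distrib)
  qed
  from this[of "iv y \<setminus> P x v"] have "iv c \<otimes> h (iv y \<setminus> P x v) = v"
    by simp
  then have "h (iv y \<setminus> P x v) = iv c \<setminus> v"
    by (rule ldiv_eqI[symmetric])
  then have "P c v = c \<otimes> h (iv y \<setminus> P x v)"
    by (simp add: P_def)
  also have "\<dots> = g (iv y \<setminus> P x v)"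
    by (simp add: h_def)
  also have "\<dots> = P x (P y (P x v))"
    by (simp add: g_def P_def)
  finally show ?thesis by (simp add: c_def)
qed

lemma square_P: "P x y \<otimes> P x y = P x (P y (x \<otimes> x))"
  using P_sandwich[of x y e] by simp

abbreviation pw where "pw x k \<equiv> lpow m e x k"

lemma pw_succ: "x \<otimes> pw x k = pw x (k + 1)"
  by (rule lpow_succ[OF bij_ltrans])

lemma pw_zero [simp]: "pw x 0 = e"
  by (simp add: lpow_def)

lemma pw_one [simp]: "pw x 1 = x"
  using pw_succ[of x 0] by simp

lemma inner_fixes_pw:
  assumes f: "f \<in> inn m e" and "f x = x"
  shows "f (pw x n) = pw x n"
proof (induction n rule: int_induct[where k = 0])
  case base
  then show ?case using f by (simp add: inn_def)
next
  case (step1 i)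
  then show ?case using inner_mult[OF f, of x "pw x i"] \<open>f x = x\<close> by (simp add: pw_succ)
next
  case (step2 i)
  have "pw x (i - 1) = x \<setminus> pw x i"
    using pw_succ[of x "i - 1"] by (simp add: ldiv_eqI)
  then show ?case using inner_ldiv[OF f, of x "pw x i"] \<open>f x = x\<close> step2 by simp
qed

lemma iv_mult_pw_succ: "iv x \<otimes> pw x (k + 1) = pw x k"
  using inner_fixes_pw[OF inner_iv_mult_mult iv_mult_mult_self, of x k] by (simp add: pw_succ)

lemma pw_shift_in_mlt: "\<exists>g \<in> mlt m. \<forall>n. g (pw x n) = pw x (n + k)"
proof (cases "0 \<le> k")
  case True
  have "((\<lambda>z. x \<otimes> z) ^^ nat k) (pw x n) = pw x (n + int (nat k) * 1)" for n
    by (rule funpow_shift) (rule pw_succ)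
  with True show ?thesis
    by (intro bexI[of _ "(\<lambda>z. x \<otimes> z) ^^ nat k"] mlt_funpow lmult_in_mlt) simp
next
  case False
  have "((\<lambda>z. iv x \<otimes> z) ^^ nat (- k)) (pw x n) = pw x (n + int (nat (- k)) * - 1)" for n
    by (rule funpow_shift) (use iv_mult_pw_succ[of x "_ - 1"] in simp)
  with False show ?thesis
    by (intro bexI[of _ "(\<lambda>z. iv x \<otimes> z) ^^ nat (- k)"] mlt_funpow lmult_in_mlt) simp
qed

lemma pw_add: "pw x k \<otimes> pw x n = pw x (k + n)"
proof -
  obtain g where g: "g \<in> mlt m" and shift: "\<And>n. g (pw x n) = pw x (n + k)"
    using pw_shift_in_mlt[of x k] by blast
  define f where "f = (\<lambda>z. pw x k \<setminus> g z)"
  have "f \<in> inn m e"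
    unfolding f_def by (rule innI, rule mlt_compose[OF ldiv_in_mlt g]) (simp add: shift[of 0, simplified])
  moreover have "f x = x"
    using shift[of 1] pw_succ[of x k] by (simp add: f_def commute ldiv_eqI add.commute)
  ultimately have "pw x k \<setminus> pw x (n + k) = pw x n"
    using inner_fixes_pw[of f x n] by (simp add: f_def shift)
  then show ?thesis by (metis mult_ldiv add.commute)
qed

end

locale uniquely_2_divisible_comm_A_loop = comm_A_loop +
  assumes uniquely_2_divisible: "uniquely_2_divisible m"
begin

lemma square_inj: "a \<otimes> a = b \<otimes> b \<Longrightarrow> a = b"
  using uniquely_2_divisible by (auto simp: uniquely_2_divisible_def dest: bij_is_inj injD)

lemma square_sqrt [simp]: "sqrt_l m z \<otimes> sqrt_l m z = z"
proof -
  have "surj (\<lambda>w. w \<otimes> w)"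
    using uniquely_2_divisible by (simp add: uniquely_2_divisible_def bij_is_surj)
  then obtain w where "z = w \<otimes> w"
    by (rule surjE)
  then have "\<exists>!w. w \<otimes> w = z" by (auto intro: ex1I[of _ w] square_inj)
  then show ?thesis unfolding sqrt_l_def by (rule theI')
qed

lemma sqrt_eqI: "w \<otimes> w = z \<Longrightarrow> sqrt_l m z = w"
  using square_inj square_sqrt by blast

abbreviation circ (infixl "\<odot>" 70) where "x \<odot> y \<equiv> circ_op m e x y"

lemma square_circ [simp]: "(x \<odot> y) \<otimes> (x \<odot> y) = P x (y \<otimes> y)"
  by (simp add: circ_op_def P_conv_ldiv)

lemma circ_eqI: "w \<otimes> w = P x (y \<otimes> y) \<Longrightarrow> x \<odot> y = w"
  by (simp add: circ_op_def P_conv_ldiv sqrt_eqI)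

lemma bij_circ_left: "bij (\<lambda>y. x \<odot> y)"
proof (rule bijI)
  show "inj (\<lambda>y. x \<odot> y)"
  proof (rule injI)
    fix y z assume "x \<odot> y = x \<odot> z"
    then have "P x (y \<otimes> y) = P x (z \<otimes> z)"
      using square_circ[of x y] square_circ[of x z] by simp
    then have "y \<otimes> y = z \<otimes> z" by simp
    then show "y = z" by (rule square_inj)
  qed
  show "surj (\<lambda>y. x \<odot> y)"
    by (rule surjI[of _ "\<lambda>d. sqrt_l m (P (iv x) (d \<otimes> d))"], rule circ_eqI) simp
qed

lemma bij_circ_right: "bij (\<lambda>y. y \<odot> x)"
proof (rule bijI)
  show "inj (\<lambda>y. y \<odot> x)"
  proof (rule injI)
    fix y z assume "y \<odot> x = z \<odot> x"
    then have "P y (x \<otimes> x) = P z (x \<otimes> x)"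
      using square_circ[of y x] square_circ[of z x] by simp
    then have "P x y \<otimes> P x y = P x z \<otimes> P x z" by (simp add: square_P)
    then have "P x y = P x z" by (rule square_inj)
    then show "y = z" by simp
  qed
  show "surj (\<lambda>y. y \<odot> x)"
  proof (rule surjI)
    fix d
    define r where "r = sqrt_l m (P x (d \<otimes> d))"
    have "P (iv x) (x \<otimes> x) = e"
      using P_iv_P[of x e] by simp
    then have "d \<otimes> d = P (iv x) (P r (P (iv x) (x \<otimes> x)))"
      by (simp add: r_def)
    also have "\<dots> = P (P (iv x) r) (x \<otimes> x)"
      by (rule P_sandwich)
    finally show "P (iv x) r \<odot> x = d" by (rule circ_eqI)
  qed
qed

lemma circ_left_unit [simp]: "e \<odot> y = y" and circ_right_unit [simp]: "x \<odot> e = x"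
  by (auto intro!: circ_eqI)

lemma loop_circ: "loop (circ_op m e) e"
  using bij_circ_left bij_circ_right by (simp add: loop_def)

lemma circ_circ_self: "x \<odot> (y \<odot> x) = P x y"
  by (rule circ_eqI) (simp add: square_P)

lemma circ_left_bol: "x \<odot> (y \<odot> (x \<odot> z)) = (x \<odot> (y \<odot> x)) \<odot> z"
  by (rule square_inj) (simp add: circ_circ_self P_sandwich)

lemma linv_circ: "linv (circ_op m e) e x = iv x"
proof -
  have right_inverse: "x \<odot> iv x = e" by (rule circ_eqI) (simp add: P_def)
  moreover have "z = iv x" if "x \<odot> z = e" for z
    using injD[OF bij_is_inj[OF bij_circ_left[of x]], of z "iv x"] that right_inverse by simp
  ultimately show ?thesis
    unfolding linv_def[of "circ_op m e"] ldiv_def[of "circ_op m e"] by (rule the_equality)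
qed

lemma iv_circ_distrib: "iv (x \<odot> y) = iv x \<odot> iv y"
  by (rule sym, rule circ_eqI) (simp add: iv_P flip: iv_mult_distrib)

lemma left_bruck_loop_circ: "left_bruck_loop (circ_op m e) e"
  by (simp add: left_bruck_loop_def loop_circ circ_left_bol linv_circ iv_circ_distrib)

lemma circ_pw_succ: "x \<odot> pw x k = pw x (k + 1)"
proof (rule circ_eqI)
  have "pw x (k + 1) \<otimes> pw x (k + 1) = x \<otimes> pw x (k + k + 1)"
    by (simp add: pw_add pw_succ algebra_simps)
  also have "pw x (k + k + 1) = iv x \<setminus> pw x (k + k)"
    by (rule ldiv_eqI[symmetric]) (rule iv_mult_pw_succ)
  also have "x \<otimes> (iv x \<setminus> pw x (k + k)) = P x (pw x k \<otimes> pw x k)"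
    by (simp add: P_def pw_add)
  finally show "pw x (k + 1) \<otimes> pw x (k + 1) = P x (pw x k \<otimes> pw x k)" .
qed

lemma lpow_circ: "lpow (circ_op m e) e x n = pw x n"
  by (rule lpow_eqI[of "circ_op m e" x "pw x"]) (simp_all add: ltrans_def bij_circ_left circ_pw_succ)

end

theorem lemma3p5:
  fixes m :: "'a \<Rightarrow> 'a \<Rightarrow> 'a" and e :: 'a
  assumes "commutative_A_loop m e"
    and "uniquely_2_divisible m"
  shows "left_bruck_loop (circ_op m e) e
     \<and> (\<forall>x (n::int). lpow m e x n = lpow (circ_op m e) e x n)"
proof -
  interpret uniquely_2_divisible_comm_A_loop m e
    using assms by unfold_locales (auto simp: commutative_A_loop_def)
  show ?thesis using left_bruck_loop_circ lpow_circ by simp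
qed

end
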